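(* Let $\mathcal{T}$ be a planar rectilinear mesh with convex polygonal faces, $m\in\mathbb{Z}_{\ge0}$, $r\in\mathbb{Z}_{\ge-1}$, and $\mathbf r$ a smoothness distribution with values in $\{r,-1\}$ on interior edges. Let $\sigma$ be a face bounded by interior edges $\tau_1,\dots,\tau_k$ with $\mathbf r(\tau_i)=r$, let $\gamma_i=\tau_i\cap\tau_{i+1}$ (indices cyclic in $1,\dots,k$) be interior vertices, and let $\ell_i$ be an affine-linear form vanishing on $\tau_i$. Let $\mathbf s$ agree with $\mathbf r$ except $\mathbf s(\tau_i)=-1$ for $i=1,\dots,k$, and let $$\phi:\bigoplus_{i=1}^k{\mathcal{P}}_m/\langle\ell_i^{r+1}\rangle\longrightarrow\bigoplus_{i=1}^k{\mathcal{P}}_m/\mathfrak{J}^{\mathbf r}_{\gamma_i},\qquad (a_1,\dots,a_k)\mapsto(-a_1+a_2,\,-a_2+a_3,\,\dots,\,-a_{k-1}+a_k,\,a_1-a_k)$$ be the nontrivial map of the complex $\mathcal{I}^{\mathbf s}/\mathcal{I}^{\mathbf r}$. Then the cokernel of $\phi$ (and hence $H_0(\mathcal{I}^{\mathbf s}/\mathcal{I}^{\mathbf r})$) is isomorphic to ${\mathcal{P}}_m/(\mathfrak{J}^{\mathbf r}_{\gamma_1}+\cdots+\mathfrak{J}^{\mathbf r}_{\gamma_k})$.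
   Context: $\mathcal{T}$ is a finite subdivision of a closed polygonal region $\Omega\subset\mathbb{R}^2$ (possibly not simply connected) into convex polygonal faces meeting along straight edges and vertices. An edge or vertex is interior if not contained in $\partial\Omega$; $\mathcal{T}^\circ_1,\mathcal{T}^\circ_0$ denote interior edges and vertices. ${\mathcal{P}}_m$ is the space of real bivariate polynomials of total degree at most $m$; $\langle f_1,\dots,f_j\rangle$ denotes the subspace of ${\mathcal{P}}_m$ of polynomial combinations $\sum g_if_i$ lying in ${\mathcal{P}}_m$. A smoothness distribution is a map $\mathbf{r}:\mathcal{T}^\circ_1\to\mathbb{Z}_{\ge -1}$. For $\tau\in\mathcal{T}^\circ_1$ with vanishing affine-linear form $\ell_\tau$, $\mathfrak{J}^{\mathbf r}_\tau=\langle \ell_\tau^{\mathbf r(\tau)+1}\rangle$ (equal to ${\mathcal{P}}_m$ if $\mathbf r(\tau)=-1$); for $\gamma\in\mathcal{T}^\circ_0$, $\mathfrak{J}^{\mathbf r}_\gamma=\sum_{\tau\ni\gamma}\mathfrak{J}^{\mathbf r}_\tau$. $\mathcal{I}^{\mathbf r}$ is the chain complex $0\to\bigoplus_{\tau\in\mathcal{T}^\circ_1}\mathfrak{J}^{\mathbf r}_\tau\to\bigoplus_{\gamma\in\mathcal{T}^\circ_0}\mathfrak{J}^{\mathbf r}_\gamma$ (degrees $2,1,0$) whose nonzero map is the cellular boundary map relative to $\partial\Omega$ (signs $\pm1$ from fixed edge orientations); for $\mathbf s\le\mathbf r$ pointwise, $\mathcal{I}^{\mathbf s}/\mathcal{I}^{\mathbf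 r}$ is the quotient complex. *)

theory Defs
  imports "HOL-Analysis.Analysis" "HOL-Library.Function_Algebras"
begin

type_synonym pt = "real \<times> real"
type_synonym bpoly = "pt \<Rightarrow> real"

text \<open>Real bivariate polynomials of total degree at most m, as polynomial functions
  on the plane (a real polynomial is determined by its function).\<close>
definition Pm :: "nat \<Rightarrow> bpoly set" where
  "Pm m = {f. \<exists>c :: nat \<Rightarrow> nat \<Rightarrow> real. \<forall>x y.
              f (x, y) = (\<Sum>(i, j)\<in>{(i, j). i + j \<le> m}. c i j * x ^ i * y ^ j)}"

definition allpoly :: "bpoly set" where
  "allpoly = (\<Union>m. Pm m)"

definition gen1 :: "nat \<Rightarrow> bpoly \<Rightarrow> bpoly set" where
  "gen1 m f = {h \<in> Pm m. \<exists>g \<in> allpoly. h = (\<lambda>p. g p * f p)}"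

definition affine_form :: "bpoly \<Rightarrow> bool" where
  "affine_form l \<longleftrightarrow> (\<exists>a b c. (a, b) \<noteq> (0, 0) \<and> (\<forall>x y. l (x, y) = a * x + b * y + c))"

definition vanishes_on :: "bpoly \<Rightarrow> pt set \<Rightarrow> bool" where
  "vanishes_on l S \<longleftrightarrow> (\<forall>p\<in>S. l p = 0)"

definition J_edge :: "nat \<Rightarrow> (pt set \<Rightarrow> bpoly) \<Rightarrow> (pt set \<Rightarrow> int) \<Rightarrow> pt set \<Rightarrow> bpoly set" where
  "J_edge m ell rr \<tau> = (if rr \<tau> = -1 then Pm m
                         else gen1 m (\<lambda>p. (ell \<tau> p) ^ nat (rr \<tau> + 1)))"

definition J_vert :: "nat \<Rightarrow> pt set set \<Rightarrow> (pt set \<Rightarrow> bpoly) \<Rightarrow> (pt set \<Rightarrow> int) \<Rightarrow> pt \<Rightarrow> bpoly set" where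
  "J_vert m E ell rr \<gamma> =
     {(\<Sum>\<tau>\<in>{\<tau>\<in>E. \<gamma> \<in> \<tau>}. h \<tau>) | h. \<forall>\<tau>\<in>{\<tau>\<in>E. \<gamma> \<in> \<tau>}. h \<tau> \<in> J_edge m ell rr \<tau>}"

definition sum_spaces :: "nat \<Rightarrow> (nat \<Rightarrow> bpoly set) \<Rightarrow> bpoly set" where
  "sum_spaces k A = {(\<Sum>i<k. h i) | h. \<forall>i<k. h i \<in> A i}"

text \<open>Direct sum of A 0, ..., A (k-1), as k-tuples (functions nat => _, zero for i >= k).\<close>
definition dsum :: "nat \<Rightarrow> (nat \<Rightarrow> bpoly set) \<Rightarrow> (nat \<Rightarrow> bpoly) set" where
  "dsum k A = {b. (\<forall>i<k. b i \<in> A i) \<and> (\<forall>i\<ge>k. b i = 0)}"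

text \<open>The map phi (on representatives): (a_1..a_k) |-> (-a_1+a_2, ..., -a_{k-1}+a_k, a_1-a_k);
  0-based: component i is a ((i+1) mod k) - a i.\<close>
definition phi :: "nat \<Rightarrow> (nat \<Rightarrow> bpoly) \<Rightarrow> (nat \<Rightarrow> bpoly)" where
  "phi k a = (\<lambda>i. if i < k then a (Suc i mod k) - a i else 0)"

text \<open>Isomorphism of subquotients V/U and W/Z of real vector spaces (of functions):
  a real-linear map F on V onto W with F^{-1}(Z) \<inter> V = U; it induces V/U \<cong> W/Z,
  and every such isomorphism arises this way.\<close>
definition subquot_iso :: "(nat \<Rightarrow> bpoly) set \<Rightarrow> (nat \<Rightarrow> bpoly) set \<Rightarrow>
                           bpoly set \<Rightarrow> bpoly set \<Rightarrow> bool" where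
  "subquot_iso V U W Z \<longleftrightarrow>
     (\<exists>F. (\<forall>u\<in>V. \<forall>v\<in>V. F (u + v) = F u + F v)
        \<and> (\<forall>t::real. \<forall>u\<in>V. F (\<lambda>i p. t * u i p) = (\<lambda>p. t * F u p))
        \<and> F ` V = W
        \<and> (\<forall>u\<in>V. F u \<in> Z \<longleftrightarrow> u \<in> U))"

end

theory Submission
  imports Defs
begin

text \<open>The summation map \<open>(a\<^sub>1, \<dots>, a\<^sub>k) \<mapsto> a\<^sub>1 + \<dots> + a\<^sub>k\<close> from \<open>\<Oplus> P\<^sub>m\<close> onto \<open>P\<^sub>m\<close>
  induces the isomorphism. It kills the image of \<open>\<phi>\<close> because cyclic differences telescope
  to zero. Conversely, if the entries of \<open>u\<close> sum to \<open>h\<^sub>1 + \<dots> + h\<^sub>k\<close> with \<open>h\<^sub>i \<in> J\<^sub>\<gamma>\<^sub>i\<close>, then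
  \<open>d = u - h\<close> has entry sum zero, and such a tuple is \<open>\<phi>\<close> of its partial sums.
  The geometry of the face only enters through \<open>k \<ge> 1\<close>: a compact set with nonempty
  interior has nonempty frontier.\<close>

lemma Pm_zero: "0 \<in> Pm m"
  unfolding Pm_def by (auto intro: exI[of _ "\<lambda>i j. 0"])

lemma Pm_add:
  assumes "f \<in> Pm m" "g \<in> Pm m"
  shows "f + g \<in> Pm m"
proof -
  obtain c d where
    c: "\<And>x y. f (x, y) = (\<Sum>(i, j)\<in>{(i, j). i + j \<le> m}. c i j * x ^ i * y ^ j)" and
    d: "\<And>x y. g (x, y) = (\<Sum>(i, j)\<in>{(i, j). i + j \<le> m}. d i j * x ^ i * y ^ j)"
    using assms unfolding Pm_def by blast
  have "(f + g) (x, y) = (\<Sum>(i, j)\<in>{(i, j). i + j \<le> m}. (c i j + d i j) * x ^ i * y ^ j)"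
    for x y using c d by (simp add: sum.distrib[symmetric] case_prod_beta algebra_simps)
  then show ?thesis
    unfolding Pm_def by (intro CollectI exI[of _ "\<lambda>i j. c i j + d i j"] allI)
qed

lemma Pm_uminus:
  assumes "f \<in> Pm m"
  shows "- f \<in> Pm m"
proof -
  obtain c where
    c: "\<And>x y. f (x, y) = (\<Sum>(i, j)\<in>{(i, j). i + j \<le> m}. c i j * x ^ i * y ^ j)"
    using assms unfolding Pm_def by blast
  have "(- f) (x, y) = (\<Sum>(i, j)\<in>{(i, j). i + j \<le> m}. (- c i j) * x ^ i * y ^ j)"
    for x y using c by (simp add: sum_negf[symmetric] case_prod_beta)
  then show ?thesis
    unfolding Pm_def by (intro CollectI exI[of _ "\<lambda>i j. - c i j"] allI)
qed

lemma Pm_diff: "f \<in> Pm m \<Longrightarrow> g \<in> Pm m \<Longrightarrow> f - g \<in> Pm m"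
  using Pm_add[of f m "- g"] Pm_uminus[of g m] by simp

lemma Pm_sum: "(\<And>i. i \<in> A \<Longrightarrow> f i \<in> Pm m) \<Longrightarrow> sum f A \<in> Pm m"
  by (induction A rule: infinite_finite_induct) (auto intro: Pm_zero Pm_add)

lemma J_edge_subset_Pm: "J_edge m ell rr \<tau> \<subseteq> Pm m"
  unfolding J_edge_def gen1_def by auto

lemma J_vert_subset_Pm: "J_vert m E ell rr \<gamma> \<subseteq> Pm m"
  unfolding J_vert_def using J_edge_subset_Pm by (force intro!: Pm_sum)

lemma sum_apply: "(\<Sum>i\<in>A. f i) x = (\<Sum>i\<in>A. f i x)"
  by (induction A rule: infinite_finite_induct) auto

lemma sum_cyclic_diff_eq_0:
  "(\<Sum>i<k. a (Suc i mod k) - a i :: 'a::ab_group_add) = 0"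
proof (cases k)
  case (Suc n)
  have "(\<Sum>i<Suc n. a (Suc i mod Suc n)) = (\<Sum>i<n. a (Suc i)) + a 0"
    by (simp add: sum.lessThan_Suc)
  also have "\<dots> = (\<Sum>i<Suc n. a i)"
    by (metis sum.lessThan_Suc_shift add.commute)
  finally show ?thesis
    using Suc by (simp add: sum_subtractf)
qed simp

lemma sum_phi_eq_0: "(\<Sum>i<k. phi k a i) = 0"
  by (simp add: phi_def sum_cyclic_diff_eq_0)

lemma zero_sum_eq_phi_partial_sums:
  assumes d: "d \<in> dsum k (\<lambda>_. Pm m)" and sum_d: "(\<Sum>i<k. d i) = 0"
  obtains a where "a \<in> dsum k (\<lambda>_. Pm m)" and "d = phi k a"
proof
  define a where "a = (\<lambda>i. if i < k then (\<Sum>l<i. d l) else 0)"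
  show "a \<in> dsum k (\<lambda>_. Pm m)"
    using d unfolding a_def dsum_def by (auto intro!: Pm_sum)
  show "d = phi k a"
  proof
    fix i
    consider "Suc i < k" | "k = Suc i" | "k \<le> i"
      by linarith
    then show "d i = phi k a i"
    proof cases
      case 2
      then have "d i = - (\<Sum>l<i. d l)"
        using sum_d by (simp add: eq_neg_iff_add_eq_0 add.commute)
      with 2 show ?thesis
        unfolding phi_def a_def by simp
    qed (use d in \<open>auto simp: phi_def a_def dsum_def\<close>)
  qed
qed

lemma sum_in_sum_spaces_iff:
  assumes J: "\<forall>i<k. J i \<subseteq> Pm m" and u: "u \<in> dsum k (\<lambda>_. Pm m)"
  shows "(\<Sum>i<k. u i) \<in> sum_spaces k J \<longleftrightarrow>
         u \<in> {j + phi k a | j a. j \<in> dsum k J \<and> a \<in> dsum k (\<lambda>_. Pm m)}"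
proof
  assume "(\<Sum>i<k. u i) \<in> sum_spaces k J"
  then obtain h where h: "\<forall>i<k. h i \<in> J i" and sum_u: "(\<Sum>i<k. u i) = (\<Sum>i<k. h i)"
    unfolding sum_spaces_def by blast
  define j where "j = (\<lambda>i. if i < k then h i else 0)"
  have j: "j \<in> dsum k J"
    unfolding j_def dsum_def using h by auto
  have "\<forall>i<k. j i \<in> Pm m"
    using h J unfolding j_def by auto
  then have "u - j \<in> dsum k (\<lambda>_. Pm m)"
    using u j unfolding dsum_def by (auto intro!: Pm_diff)
  moreover have "(\<Sum>i<k. (u - j) i) = 0"
    using sum_u by (simp add: j_def sum_subtractf)
  ultimately obtain a where "a \<in> dsum k (\<lambda>_. Pm m)" and "u - j = phi k a"
    by (rule zero_sum_eq_phi_partial_sums)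
  then have "u = j + phi k a \<and> j \<in> dsum k J \<and> a \<in> dsum k (\<lambda>_. Pm m)"
    using j by (metis add.commute diff_add_cancel)
  then show "u \<in> {j + phi k a | j a. j \<in> dsum k J \<and> a \<in> dsum k (\<lambda>_. Pm m)}"
    by blast
next
  assume "u \<in> {j + phi k a | j a. j \<in> dsum k J \<and> a \<in> dsum k (\<lambda>_. Pm m)}"
  then obtain j a where u_eq: "u = j + phi k a" and j: "j \<in> dsum k J"
    by blast
  have "(\<Sum>i<k. u i) = (\<Sum>i<k. j i)"
    using sum_phi_eq_0[of k a] by (simp add: u_eq sum.distrib)
  then show "(\<Sum>i<k. u i) \<in> sum_spaces k J"
    using j unfolding sum_spaces_def dsum_def by blast
qed

lemma sum_image_dsum_Pm:
  assumes "k > 0"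
  shows "(\<lambda>u. \<Sum>i<k. u i) ` dsum k (\<lambda>_. Pm m) = Pm m"
proof
  show "(\<lambda>u. \<Sum>i<k. u i) ` dsum k (\<lambda>_. Pm m) \<subseteq> Pm m"
    unfolding dsum_def by (auto intro!: Pm_sum)
  show "Pm m \<subseteq> (\<lambda>u. \<Sum>i<k. u i) ` dsum k (\<lambda>_. Pm m)"
  proof
    fix p assume p: "p \<in> Pm m"
    let ?u = "\<lambda>i. if i = 0 then p else 0"
    have "?u \<in> dsum k (\<lambda>_. Pm m)"
      unfolding dsum_def using p assms Pm_zero by auto
    moreover have "(\<Sum>i<k. ?u i) = p"
      using assms by (simp add: sum.delta)
    ultimately show "p \<in> (\<lambda>u. \<Sum>i<k. u i) ` dsum k (\<lambda>_. Pm m)"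
      by (metis image_eqI)
  qed
qed

theorem subquot_iso_coker_phi:
  assumes "k > 0" and "\<forall>i<k. J i \<subseteq> Pm m"
  shows "subquot_iso (dsum k (\<lambda>_. Pm m))
           {j + phi k a | j a. j \<in> dsum k J \<and> a \<in> dsum k (\<lambda>_. Pm m)}
           (Pm m) (sum_spaces k J)"
  unfolding subquot_iso_def
proof (intro exI conjI)
  let ?F = "\<lambda>u::nat \<Rightarrow> bpoly. \<Sum>i<k. u i"
  show "\<forall>u\<in>dsum k (\<lambda>_. Pm m). \<forall>v\<in>dsum k (\<lambda>_. Pm m). ?F (u + v) = ?F u + ?F v"
    by (simp add: sum.distrib)
  show "\<forall>t::real. \<forall>u\<in>dsum k (\<lambda>_. Pm m). ?F (\<lambda>i p. t * u i p) = (\<lambda>p. t * ?F u p)"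
    by (simp add: fun_eq_iff sum_apply sum_distrib_left)
  show "?F ` dsum k (\<lambda>_. Pm m) = Pm m"
    using assms(1) by (rule sum_image_dsum_Pm)
  show "\<forall>u\<in>dsum k (\<lambda>_. Pm m). ?F u \<in> sum_spaces k J \<longleftrightarrow>
          u \<in> {j + phi k a | j a. j \<in> dsum k J \<and> a \<in> dsum k (\<lambda>_. Pm m)}"
    using assms(2) sum_in_sum_spaces_iff by blast
qed

theorem mainTheorem7:
  fixes m :: nat and r :: int and k :: nat
    and E :: "pt set set"            \<comment> \<open>interior edges of the mesh\<close>
    and V :: "pt set"                \<comment> \<open>interior vertices of the mesh\<close>
    and ell :: "pt set \<Rightarrow> bpoly"     \<comment> \<open>affine form vanishing on each edge\<close>
    and rr :: "pt set \<Rightarrow> int"       \<comment> \<open>smoothness distribution\<close>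
    and \<sigma> :: "pt set"                \<comment> \<open>the face\<close>
    and \<tau> :: "nat \<Rightarrow> pt set" and \<gamma> :: "nat \<Rightarrow> pt"
  assumes "finite E" and "finite V"
    and "\<forall>e\<in>E. \<exists>a b. a \<noteq> b \<and> e = closed_segment a b"
    and "\<forall>e\<in>E. affine_form (ell e) \<and> vanishes_on (ell e) e"
    and "r \<ge> -1"
    and "\<forall>e\<in>E. rr e \<in> {r, -1}"
    and "convex \<sigma>" and "compact \<sigma>" and "interior \<sigma> \<noteq> {}"
    and "frontier \<sigma> = (\<Union>i<k. \<tau> i)"
    and "inj_on \<tau> {..<k}"
    and "\<forall>i<k. \<tau> i \<in> E \<and> rr (\<tau> i) = r"
    and "\<forall>i<k. \<gamma> i \<in> V \<and> \<tau> i \<inter> \<tau> (Suc i mod k) = {\<gamma> i}"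
  shows "subquot_iso
           (dsum k (\<lambda>_. Pm m))
           {j + phi k a | j a. j \<in> dsum k (\<lambda>i. J_vert m E ell rr (\<gamma> i))
                               \<and> a \<in> dsum k (\<lambda>_. Pm m)}
           (Pm m)
           (sum_spaces k (\<lambda>i. J_vert m E ell rr (\<gamma> i)))"
proof (rule subquot_iso_coker_phi)
  have "\<sigma> \<noteq> {}"
    using \<open>interior \<sigma> \<noteq> {}\<close> interior_subset by blast
  moreover have "\<sigma> \<noteq> UNIV"
    using compact_imp_bounded[OF \<open>compact \<sigma>\<close>] not_bounded_UNIV by blast
  ultimately have "frontier \<sigma> \<noteq> {}"
    by (rule frontier_not_empty)
  then show "k > 0"
    using \<open>frontier \<sigma> = (\<Union>i<k. \<tau> i)\<close> by (auto intro: Nat.gr0I)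
  show "\<forall>i<k. J_vert m E ell rr (\<gamma> i) \<subseteq> Pm m"
    using J_vert_subset_Pm by blast
qed

end
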